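(* For any integer $m\ge0$, both $\{E_n(x)^{q^m}\}_{n\ge0}$ and $\{\mathcal{D}_n(x)^{q^m}\}_{n\ge0}$ are orthonormal bases of $LC(O,K)$.
   Context: Let $q$ be a prime power, $K=\mathbf{F}_q((T))$, $O=\mathbf{F}_q[[T]]$ with $T$-adic absolute value. $LC(O,K)$ is the $K$-Banach space of continuous $\mathbf{F}_q$-linear functions $O\to K$ with sup-norm; a sequence $(f_n)$ is an orthonormal basis if every $f$ can be written uniquely as $f=\sum a_nf_n$ with $a_n\in K$, $a_n\to0$, and then $\|f\|=\max|a_n|$. For $n\ge1$: $[n]=T^{q^n}-T$, $F_0=1$, $F_n=[n][n-1]^q\cdots[1]^{q^{n-1}}$, $e_n(x)=\prod_{m\in\mathbf{F}_q[T],\deg m<n}(x-m)$; $E_0(x)=x$, $E_n=e_n/F_n$. Hasse derivatives: $\mathcal{D}_n(\sum_ia_iT^i)=\sum_i\binom{i}{n}a_iT^{i-n}$ (binomials in $\mathbf{F}_q$). *)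

theory Defs
  imports "HOL-Analysis.Analysis" "HOL-Computational_Algebra.Formal_Laurent_Series"
begin

text \<open>Setting: F_q is a finite field type 'a, q = CARD('a).
  K = F_q((T)) is the type 'a fls, O = F_q[[T]] is the type 'a fps,
  embedded into K via fps_to_fls.\<close>

definition tabs :: "'a::{field,finite} fls \<Rightarrow> real" where
  "tabs a = (if a = 0 then 0 else real CARD('a) powi (- fls_subdegree a))"

definition tcont :: "('a::{field,finite} fps \<Rightarrow> 'a fls) \<Rightarrow> bool" where
  "tcont f \<longleftrightarrow> (\<forall>x. \<forall>e>0. \<exists>d>0. \<forall>y.
      tabs (fps_to_fls y - fps_to_fls x) < d \<longrightarrow> tabs (f y - f x) < e)"

definition fq_linear :: "('a::{field,finite} fps \<Rightarrow> 'a fls) \<Rightarrow> bool" where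
  "fq_linear f \<longleftrightarrow> (\<forall>c d x y. f (fps_const c * x + fps_const d * y)
                        = fls_const c * f x + fls_const d * f y)"

definition LC :: "('a::{field,finite} fps \<Rightarrow> 'a fls) set" where
  "LC = {f. fq_linear f \<and> tcont f}"

definition supnorm :: "('a::{field,finite} fps \<Rightarrow> 'a fls) \<Rightarrow> real" where
  "supnorm f = (SUP x. tabs (f x))"

definition series_to :: "(nat \<Rightarrow> 'a::{field,finite} fls) \<Rightarrow> (nat \<Rightarrow> 'a fps \<Rightarrow> 'a fls)
    \<Rightarrow> ('a fps \<Rightarrow> 'a fls) \<Rightarrow> bool" where
  "series_to a b f \<longleftrightarrow>
     (\<lambda>N. supnorm (\<lambda>x. f x - (\<Sum>n<N. a n * b n x))) \<longlonglongrightarrow> 0"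

definition null_seq :: "(nat \<Rightarrow> 'a::{field,finite} fls) \<Rightarrow> bool" where
  "null_seq a \<longleftrightarrow> (\<lambda>n. tabs (a n)) \<longlonglongrightarrow> 0"

definition orthonormal_basis :: "(nat \<Rightarrow> 'a::{field,finite} fps \<Rightarrow> 'a fls) \<Rightarrow> bool" where
  "orthonormal_basis b \<longleftrightarrow>
     (\<forall>n. b n \<in> LC) \<and>
     (\<forall>f\<in>LC. \<exists>!a. null_seq a \<and> series_to a b f) \<and>
     (\<forall>f\<in>LC. \<forall>a. null_seq a \<and> series_to a b f \<longrightarrow>
        (\<exists>n. tabs (a n) = supnorm f) \<and> (\<forall>n. tabs (a n) \<le> supnorm f))"

definition bracket :: "'a::{field,finite} itself \<Rightarrow> nat \<Rightarrow> 'a fls" where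
  "bracket _ i = fls_X ^ (CARD('a) ^ i) - fls_X"

definition carlitzF :: "'a::{field,finite} itself \<Rightarrow> nat \<Rightarrow> 'a fls" where
  "carlitzF t n = (\<Prod>i\<in>{1..n}. bracket t i ^ (CARD('a) ^ (n - i)))"

text \<open>e_n(x) = prod over m in F_q[T], deg m < n, of (x - m); polynomials of degree < n
  are identified with the power series whose coefficients vanish from index n on.\<close>
definition carlitz_e :: "nat \<Rightarrow> 'a::{field,finite} fps \<Rightarrow> 'a fls" where
  "carlitz_e n x = (\<Prod>m\<in>{m :: 'a fps. \<forall>i\<ge>n. m $ i = 0}. fps_to_fls x - fps_to_fls m)"

definition carlitzE :: "nat \<Rightarrow> 'a::{field,finite} fps \<Rightarrow> 'a fls" where
  "carlitzE n x = (if n = 0 then fps_to_fls x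
                   else carlitz_e n x / carlitzF TYPE('a) n)"

text \<open>Hasse derivative D_n(sum a_i T^i) = sum binom(i,n) a_i T^(i-n), binomials in F_q.\<close>
definition hasse :: "nat \<Rightarrow> 'a::{field,finite} fps \<Rightarrow> 'a fls" where
  "hasse n x = fps_to_fls (Abs_fps (\<lambda>j. of_nat ((j + n) choose n) * x $ (j + n)))"

end

theory Submission
  imports Defs "HOL-Computational_Algebra.Polynomial"
begin

text \<open>
  Both families are triangular with respect to the monomials T^i: b_n(T^i) = 0 for i < n,
  |b_n(T^n)| = 1 and |b_n(T^i)| < 1 for i > n. A continuous F_q-linear map is controlled by
  its values on the monomials, which tend to 0, and its sup norm is attained at one of them.
  For a triangular family this lets one solve for the coefficients of f recursively, and each
  block of further terms at least halves the sup norm of the remainder, so the expansion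
  converges; the ultrametric inequality at the monomial where the norm of f is attained gives
  ||f|| = max |a_n|. Raising to the power q^m preserves all of this, since Frobenius is additive
  and fixes F_q. For D_n triangularity is D_n(T^i) = binom(i, n) T^(i-n); for E_n it follows
  from v(e_n(T^i)) = (1 + q + ... + q^(n-1)) + (i - n) for i >= n, obtained by writing the
  roots of e_(n+1) as c + T m with m a root of e_n.
\<close>

section \<open>The T-adic absolute value\<close>

lemma card_ge_2: "CARD('a::{field,finite}) \<ge> 2"
proof -
  have "card {0::'a, 1} \<le> CARD('a)" by (rule card_mono) auto
  then show ?thesis by simp
qed

lemma card_power_gt_1: "k > 0 \<Longrightarrow> 1 < real CARD('a::{field,finite}) ^ k"
  using card_ge_2[where 'a='a] by (simp add: one_less_power)

lemma tabs_nonneg: "tabs (a::'a::{field,finite} fls) \<ge> 0"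
  unfolding tabs_def by auto

lemma tabs_0 [simp]: "tabs (0::'a::{field,finite} fls) = 0"
  unfolding tabs_def by simp

lemma tabs_eq_0_iff [simp]: "tabs (a::'a::{field,finite} fls) = 0 \<longleftrightarrow> a = 0"
  unfolding tabs_def using card_ge_2[where 'a='a] by auto

lemma tabs_pos: "(a::'a::{field,finite} fls) \<noteq> 0 \<Longrightarrow> tabs a > 0"
  using tabs_nonneg[of a] by (simp add: order_le_less)

lemma tabs_mult: "tabs ((a::'a::{field,finite} fls) * b) = tabs a * tabs b"
proof (cases "a = 0 \<or> b = 0")
  case False
  have "real CARD('a) \<noteq> 0" using card_ge_2[where 'a='a] by simp
  then show ?thesis
    using False power_int_add[of "real CARD('a)" "- fls_subdegree a" "- fls_subdegree b"]
    unfolding tabs_def by simp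
qed auto

lemma tabs_uminus [simp]: "tabs (- (a::'a::{field,finite} fls)) = tabs a"
  unfolding tabs_def by auto

lemma tabs_fls_const: "c \<noteq> 0 \<Longrightarrow> tabs (fls_const (c::'a::{field,finite})) = 1"
  unfolding tabs_def by auto

lemma tabs_fls_const_le_1: "tabs (fls_const (c::'a::{field,finite})) \<le> 1"
  by (cases "c = 0") (auto simp: tabs_fls_const)

lemma tabs_1 [simp]: "tabs (1::'a::{field,finite} fls) = 1"
  using tabs_fls_const[of "1::'a"] by simp

lemma tabs_power: "tabs ((a::'a::{field,finite} fls) ^ n) = tabs a ^ n"
  by (induction n) (simp_all add: tabs_mult)

lemma tabs_prod: "tabs (\<Prod>i\<in>S. f i :: 'a::{field,finite} fls) = (\<Prod>i\<in>S. tabs (f i))"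
  by (induction S rule: infinite_finite_induct) (auto simp: tabs_mult)

lemma tabs_divide: "tabs ((a::'a::{field,finite} fls) / b) = tabs a / tabs b"
proof (cases "b = 0")
  case False
  then have "tabs (inverse b) = inverse (tabs b)"
    using tabs_mult[of b "inverse b"] tabs_pos[OF False] by (simp add: field_simps)
  then show ?thesis by (simp add: divide_inverse tabs_mult)
qed simp

lemma tabs_add_le: "tabs ((a::'a::{field,finite} fls) + b) \<le> max (tabs a) (tabs b)"
proof (cases "a = 0 \<or> b = 0 \<or> a + b = 0")
  case True
  then show ?thesis using tabs_nonneg[of a] tabs_nonneg[of b] by auto
next
  case False
  then have sub: "fls_subdegree (a + b) \<ge> min (fls_subdegree a) (fls_subdegree b)"
    by (intro fls_plus_subdegree) auto
  have "tabs (a + b) \<le> tabs c" if "c \<noteq> 0" "fls_subdegree c \<le> fls_subdegree (a + b)" for c :: "'a fls"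
  proof -
    have "real CARD('a) powi (- fls_subdegree (a + b)) \<le> real CARD('a) powi (- fls_subdegree c)"
      using card_ge_2[where 'a='a] that(2) by (intro power_int_increasing) auto
    then show ?thesis using False that(1) unfolding tabs_def by simp
  qed
  then show ?thesis
    using False sub by (cases "fls_subdegree a \<le> fls_subdegree b") (simp_all add: le_max_iff_disj)
qed

lemma tabs_diff_le: "tabs ((a::'a::{field,finite} fls) - b) \<le> max (tabs a) (tabs b)"
  using tabs_add_le[of a "-b"] by simp

lemma tabs_sum_le:
  assumes "\<And>i. i \<in> S \<Longrightarrow> tabs (f i) \<le> c" "c \<ge> 0"
  shows "tabs (sum f S :: 'a::{field,finite} fls) \<le> c"
  using assms
proof (induction S rule: infinite_finite_induct)
  case (insert x F)
  then have "tabs (f x) \<le> c" "tabs (sum f F) \<le> c" by auto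
  then show ?case using tabs_add_le[of "f x" "sum f F"] insert(1,2) by simp
qed auto

lemma tabs_sum_le_term:
  assumes "finite S" "S \<noteq> {}"
  shows "\<exists>i\<in>S. tabs (sum f S :: 'a::{field,finite} fls) \<le> tabs (f i)"
  using assms
proof (induction S rule: finite_ne_induct)
  case (insert x F)
  then obtain i where i: "i \<in> F" "tabs (sum f F) \<le> tabs (f i)" by auto
  have "tabs (sum f (insert x F)) = tabs (f x + sum f F)" using insert by simp
  also have "\<dots> \<le> max (tabs (f x)) (tabs (sum f F))" by (rule tabs_add_le)
  also have "\<dots> \<le> max (tabs (f x)) (tabs (f i))" using i(2) by (rule max.mono[OF order_refl])
  finally have "tabs (sum f (insert x F)) \<le> max (tabs (f x)) (tabs (f i))" .
  then show ?case using i(1) by (cases "tabs (f x) \<le> tabs (f i)") (auto simp: max_def)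
qed auto

lemma tabs_fps_to_fls:
  "(x::'a::{field,finite} fps) \<noteq> 0 \<Longrightarrow> tabs (fps_to_fls x) = 1 / real CARD('a) ^ subdegree x"
  unfolding tabs_def by (simp add: fls_subdegree_fls_to_fps power_int_minus inverse_eq_divide)

lemma tabs_fps_to_fls_le_1: "tabs (fps_to_fls (x::'a::{field,finite} fps)) \<le> 1"
  using card_ge_2[where 'a='a] by (cases "x = 0") (auto simp: tabs_fps_to_fls)

lemma tabs_fls_X_power: "tabs (fls_X ^ i :: 'a::{field,finite} fls) = 1 / real CARD('a) ^ i"
  unfolding tabs_def by (simp add: power_int_minus inverse_eq_divide)

lemma tabs_less_1_imp_le_half:
  assumes "tabs (a::'a::{field,finite} fls) < 1"
  shows "tabs a \<le> 1 / 2"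
proof (cases "a = 0")
  case False
  let ?q = "real CARD('a)"
  have q: "?q \<ge> 2" using card_ge_2[where 'a='a] by simp
  have a: "tabs a = ?q powi (- fls_subdegree a)" using False unfolding tabs_def by simp
  have "\<not> fls_subdegree a \<le> 0"
  proof
    assume "fls_subdegree a \<le> 0"
    then have "?q powi 0 \<le> ?q powi (- fls_subdegree a)"
      using q by (intro power_int_increasing) auto
    then show False using assms a by simp
  qed
  then have "tabs a \<le> ?q powi (-1)"
    unfolding a using q by (intro power_int_increasing) auto
  also have "\<dots> \<le> 1 / 2" using q by (simp add: power_int_minus field_simps)
  finally show ?thesis .
qed simp

section \<open>The Frobenius map\<close>

lemma finite_field_power_card: "(x::'a::{field,finite}) ^ CARD('a) = x"
proof (cases "x = 0")
  case False
  let ?U = "UNIV - {0::'a}"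
  have "inj_on ((*) x) ?U" using False by (auto intro: inj_onI)
  moreover have "(*) x ` ?U = ?U"
  proof
    show "?U \<subseteq> (*) x ` ?U"
    proof
      fix y assume "y \<in> ?U"
      then show "y \<in> (*) x ` ?U" using False by (intro image_eqI[of _ _ "y / x"]) auto
    qed
  qed (use False in auto)
  ultimately have "\<Prod>?U = (\<Prod>y\<in>?U. x * y)"
    using prod.reindex[of "(*) x" ?U id] by simp
  also have "\<dots> = x ^ card ?U * \<Prod>?U"
    by (simp only: prod.distrib prod_constant)
  finally have "1 * \<Prod>?U = x ^ card ?U * \<Prod>?U" by simp
  moreover have "\<Prod>?U \<noteq> 0"
    by (subst prod_zero_iff) auto
  ultimately have "x ^ card ?U = 1" by (metis mult_right_cancel)
  moreover have "CARD('a) = Suc (card ?U)"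
    using card_Suc_Diff1[of "UNIV :: 'a set" 0] by simp
  ultimately show ?thesis by (metis power_Suc2 mult_1)
qed simp

lemma finite_field_power_card_power: "(x::'a::{field,finite}) ^ (CARD('a) ^ n) = x"
proof (induction n)
  case (Suc n)
  then show ?case by (metis finite_field_power_card power_Suc2 power_mult)
qed simp

text \<open>A monic polynomial whose roots form a finite additive subgroup is additive: its
  translate by y differs from it by the constant P(y), since both have the same leading
  term and agree on the subgroup.\<close>
lemma prod_diff_subgroup_additive:
  fixes W :: "'b::field set"
  assumes fin: "finite W" and zero: "0 \<in> W"
    and diff: "\<And>u v. u \<in> W \<Longrightarrow> v \<in> W \<Longrightarrow> u - v \<in> W"
  shows "(\<Prod>w\<in>W. (x + y) - w) = (\<Prod>w\<in>W. x - w) + (\<Prod>w\<in>W. y - w)"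
proof -
  define P where "P = (\<Prod>w\<in>W. [:-w, 1:])"
  have poly_P: "\<And>t. poly P t = (\<Prod>w\<in>W. t - w)" by (simp add: P_def poly_prod)
  have deg_P: "degree P = card W" unfolding P_def
    by (subst degree_prod_eq_sum_degree) auto
  have lc_P: "lead_coeff P = 1" unfolding P_def by (simp add: lead_coeff_prod)
  have card_W: "card W \<ge> 1" using fin zero by (metis One_nat_def Suc_leI card_gt_0_iff empty_iff)
  have shift: "(\<Prod>w\<in>W. (w0 + y) - w) = (\<Prod>w\<in>W. y - w)" if "w0 \<in> W" for w0
  proof (rule prod.reindex_bij_witness[of _ "\<lambda>u. u + w0" "\<lambda>w. w - w0"])
    fix u assume "u \<in> W"
    then show "u + w0 \<in> W" using diff[OF \<open>u \<in> W\<close> diff[OF zero that]] by simp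
  qed (use diff that in auto)
  have "pcompose P [:y, 1:] = P + [:poly P y:]"
  proof (rule poly_eqI_degree_lead_coeff[where n = "card W" and A = W])
    have deg: "degree (pcompose P [:y, 1:]) = card W" by (simp add: degree_pcompose deg_P)
    moreover have "lead_coeff (pcompose P [:y, 1:]) = 1" by (subst lead_coeff_comp) (auto simp: lc_P)
    moreover have "poly.coeff (P + [:poly P y:]) (card W) = 1"
      using lc_P deg_P card_W by (auto simp: coeff_pCons split: nat.splits)
    ultimately show "poly.coeff (pcompose P [:y, 1:]) (card W) = poly.coeff (P + [:poly P y:]) (card W)"
      by simp
    show "degree (pcompose P [:y, 1:]) \<le> card W" using deg by simp
    show "degree (P + [:poly P y:]) \<le> card W"
      using degree_add_le[of P "card W" "[:poly P y:]"] deg_P by auto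
    fix t assume t: "t \<in> W"
    have "poly P t = 0" unfolding poly_P using t fin by (auto intro: prod_zero)
    moreover have "poly P (t + y) = poly P y" unfolding poly_P using shift[OF t] .
    ultimately show "poly (pcompose P [:y, 1:]) t = poly (P + [:poly P y:]) t"
      by (simp add: poly_pcompose add.commute)
  qed simp
  then have "poly (pcompose P [:y, 1:]) x = poly (P + [:poly P y:]) x" by simp
  then show ?thesis by (simp add: poly_P poly_pcompose add.commute)
qed

lemma inj_fls_const: "inj (fls_const :: 'a::zero \<Rightarrow> 'a fls)"
  by (rule injI) (metis fls_const_nth)

lemma fls_const_diff: "fls_const (a - b) = fls_const a - fls_const (b::'a::ab_group_add)"
  by (intro fls_eqI) simp

lemma prod_diff_fls_const:
  "(\<Prod>c\<in>(UNIV::'a::{field,finite} set). t - fls_const c) = t ^ CARD('a) - t"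
proof -
  define P where "P = (\<Prod>c\<in>(UNIV::'a set). [:- fls_const c, 1:])"
  define R where "R = (monom 1 (CARD('a)) - [:0, 1:] :: 'a fls poly)"
  have poly_P: "\<And>t. poly P t = (\<Prod>c\<in>UNIV. t - fls_const c)" by (simp add: P_def poly_prod)
  have deg_P: "degree P = CARD('a)" unfolding P_def
    by (subst degree_prod_eq_sum_degree) auto
  have lc_P: "lead_coeff P = 1" unfolding P_def by (simp add: lead_coeff_prod)
  have "P = R"
  proof (rule poly_eqI_degree_lead_coeff[where n = "CARD('a)" and A = "range fls_const"])
    show "poly.coeff P CARD('a) = poly.coeff R CARD('a)"
      using lc_P deg_P card_ge_2[where 'a='a] by (simp add: R_def coeff_pCons split: nat.split)
    show "CARD('a) \<le> card (range (fls_const :: 'a \<Rightarrow> 'a fls))"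
      using card_image[OF inj_fls_const[where 'a='a]] by simp
    show "degree P \<le> CARD('a)" using deg_P by simp
    show "degree R \<le> CARD('a)" unfolding R_def
      using degree_diff_le[of "monom (1::'a fls) CARD('a)" "CARD('a)" "[:0, 1:]"] card_ge_2[where 'a='a]
      by (auto simp: degree_monom_eq)
    fix z assume "z \<in> range (fls_const :: 'a \<Rightarrow> 'a fls)"
    then obtain c where c: "z = fls_const c" by auto
    have "poly P z = 0" unfolding poly_P c by (auto intro: prod_zero)
    moreover have "poly R z = 0" unfolding R_def c
      by (simp add: poly_monom finite_field_power_card flip: fls_const_power)
    ultimately show "poly P z = poly R z" by simp
  qed
  then show ?thesis using poly_P[of t] by (simp add: R_def poly_monom)
qed

lemma fls_power_card_add: "((a::'a::{field,finite} fls) + b) ^ CARD('a) = a ^ CARD('a) + b ^ CARD('a)"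
proof -
  have range: "(\<Prod>c\<in>UNIV. t - fls_const c) = (\<Prod>w\<in>range fls_const. t - w)" for t :: "'a fls"
    by (simp add: prod.reindex[OF inj_fls_const])
  have "(\<Prod>w\<in>range fls_const. (a + b) - w)
      = (\<Prod>w\<in>range fls_const. a - w) + (\<Prod>w\<in>range fls_const. b - w)"
    by (rule prod_diff_subgroup_additive) (auto simp flip: fls_const_0 fls_const_diff)
  then have "(a + b) ^ CARD('a) - (a + b) = (a ^ CARD('a) - a) + (b ^ CARD('a) - b)"
    by (simp only: prod_diff_fls_const flip: range)
  then show ?thesis by (simp add: algebra_simps)
qed

lemma fls_power_card_power_add:
  "((a::'a::{field,finite} fls) + b) ^ (CARD('a) ^ n) = a ^ (CARD('a) ^ n) + b ^ (CARD('a) ^ n)"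
proof (induction n)
  case (Suc n)
  have "(a + b) ^ (CARD('a) ^ Suc n) = ((a + b) ^ (CARD('a) ^ n)) ^ CARD('a)"
    by (simp only: power_mult power_Suc2)
  also have "\<dots> = (a ^ (CARD('a) ^ n)) ^ CARD('a) + (b ^ (CARD('a) ^ n)) ^ CARD('a)"
    by (simp add: Suc fls_power_card_add)
  finally show ?case by (simp only: power_mult power_Suc2)
qed simp

lemma fls_const_mult_power_card_power:
  "(fls_const (c::'a::{field,finite}) * a) ^ (CARD('a) ^ n) = fls_const c * a ^ (CARD('a) ^ n)"
  by (simp add: power_mult_distrib finite_field_power_card_power flip: fls_const_power)

section \<open>Continuous linear functions\<close>

lemma fq_linearD:
  "fq_linear f \<Longrightarrow> f (fps_const c * x + fps_const d * y) = fls_const c * f x + fls_const d * f y"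
  unfolding fq_linear_def by blast

lemma fq_linear_diff: "fq_linear f \<Longrightarrow> f (x - y) = f x - f y"
  using fq_linearD[of f 1 x "-1" y] by (simp flip: fps_const_neg)

lemma LC_additive: "f \<in> LC \<Longrightarrow> f (x + y) = f x + f y"
  using fq_linearD[of f 1 x 1 y] by (simp add: LC_def)

lemma LC_homogeneous: "f \<in> LC \<Longrightarrow> f (fps_const c * x) = fls_const c * f x"
  using fq_linearD[of f c x 0 0] by (simp add: LC_def)

lemma LC_vanishes_0: "f \<in> LC \<Longrightarrow> f 0 = 0"
  using LC_homogeneous[of f 0 0] by simp

lemma LC_sum_apply:
  "f \<in> LC \<Longrightarrow> f (\<Sum>i\<in>S. fps_const (c i) * x i) = (\<Sum>i\<in>S. fls_const (c i) * f (x i))"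
  by (induction S rule: infinite_finite_induct) (auto simp: LC_vanishes_0 LC_additive LC_homogeneous)

lemma LC_continuous_at_0:
  fixes f :: "'a::{field,finite} fps \<Rightarrow> 'a fls"
  assumes "f \<in> LC" "e > 0"
  shows "\<exists>d>0. \<forall>y. tabs (fps_to_fls y) < d \<longrightarrow> tabs (f y) < e"
proof -
  have "tcont f" using assms(1) unfolding LC_def by auto
  then show ?thesis
    unfolding tcont_def using assms LC_vanishes_0[OF assms(1)] by (metis diff_zero fps_zero_to_fls)
qed

lemma LC_intro:
  fixes f :: "'a::{field,finite} fps \<Rightarrow> 'a fls"
  assumes lin: "fq_linear f"
    and cont0: "\<And>e. e > 0 \<Longrightarrow> \<exists>d>0. \<forall>y. tabs (fps_to_fls y) < d \<longrightarrow> tabs (f y) < e"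
  shows "f \<in> LC"
proof -
  have "tcont f" unfolding tcont_def
  proof (intro allI impI)
    fix x and e :: real assume "e > 0"
    then obtain d where "d > 0" "\<forall>y. tabs (fps_to_fls y) < d \<longrightarrow> tabs (f y) < e"
      using cont0 by blast
    then show "\<exists>d>0. \<forall>y. tabs (fps_to_fls y - fps_to_fls x) < d \<longrightarrow> tabs (f y - f x) < e"
      by (metis fq_linear_diff[OF lin] fps_to_fls_minus)
  qed
  then show ?thesis using lin unfolding LC_def by auto
qed

lemma LC_bounded_intro:
  fixes f :: "'a::{field,finite} fps \<Rightarrow> 'a fls"
  assumes "fq_linear f" and bound: "\<And>z. tabs (f z) \<le> C * tabs (fps_to_fls z)"
  shows "f \<in> LC"
proof (rule LC_intro[OF assms(1)])
  fix e :: real assume "e > 0"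
  have "C \<ge> 0" using bound[of 1] tabs_nonneg[of "f 1"] by simp
  show "\<exists>d>0. \<forall>y. tabs (fps_to_fls y) < d \<longrightarrow> tabs (f y) < e"
  proof (intro exI[of _ "e / (C + 1)"] conjI allI impI)
    fix y :: "'a fps" assume "tabs (fps_to_fls y) < e / (C + 1)"
    then have "(C + 1) * tabs (fps_to_fls y) < e" using \<open>C \<ge> 0\<close> by (simp add: field_simps)
    moreover have "tabs (f y) \<le> (C + 1) * tabs (fps_to_fls y)"
      using bound[of y] tabs_nonneg[of "fps_to_fls y"] by (simp add: algebra_simps)
    ultimately show "tabs (f y) < e" by linarith
  qed (use \<open>e > 0\<close> \<open>C \<ge> 0\<close> in simp)
qed

lemma LC_add: "f \<in> LC \<Longrightarrow> g \<in> LC \<Longrightarrow> (\<lambda>x. f x + g x) \<in> LC"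
proof (rule LC_intro)
  assume f: "f \<in> LC" and g: "g \<in> LC"
  then show "fq_linear (\<lambda>x. f x + g x)" unfolding fq_linear_def LC_def by (simp add: algebra_simps)
  fix e :: real assume "e > 0"
  obtain d1 d2 where "d1 > 0" "\<forall>y. tabs (fps_to_fls y) < d1 \<longrightarrow> tabs (f y) < e"
    and "d2 > 0" "\<forall>y. tabs (fps_to_fls y) < d2 \<longrightarrow> tabs (g y) < e"
    using LC_continuous_at_0[OF f \<open>e > 0\<close>] LC_continuous_at_0[OF g \<open>e > 0\<close>] by blast
  then show "\<exists>d>0. \<forall>y. tabs (fps_to_fls y) < d \<longrightarrow> tabs (f y + g y) < e"
    by (intro exI[of _ "min d1 d2"]) (auto intro: le_less_trans[OF tabs_add_le])
qed

lemma LC_cmult: "f \<in> LC \<Longrightarrow> (\<lambda>x. a * f x) \<in> LC"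
proof (rule LC_intro)
  assume f: "f \<in> LC"
  then show "fq_linear (\<lambda>x. a * f x)" unfolding fq_linear_def LC_def by (simp add: algebra_simps)
  fix e :: real assume "e > 0"
  then obtain d where "d > 0" "\<forall>y. tabs (fps_to_fls y) < d \<longrightarrow> tabs (f y) < e / (tabs a + 1)"
    using LC_continuous_at_0[OF f, of "e / (tabs a + 1)"] tabs_nonneg[of a] by auto
  moreover have "tabs a * t < e" if "t < e / (tabs a + 1)" "t \<ge> 0" for t
  proof -
    have "(tabs a + 1) * t < e" using that tabs_nonneg[of a] by (simp add: field_simps)
    then show ?thesis using that(2) by (simp add: algebra_simps)
  qed
  ultimately show "\<exists>d>0. \<forall>y. tabs (fps_to_fls y) < d \<longrightarrow> tabs (a * f y) < e"
    by (metis tabs_mult tabs_nonneg)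
qed

lemma LC_zero: "(\<lambda>x. 0) \<in> LC"
  by (rule LC_intro) (auto simp: fq_linear_def)

lemma LC_diff: "f \<in> LC \<Longrightarrow> g \<in> LC \<Longrightarrow> (\<lambda>x. f x - g x) \<in> LC"
  using LC_add[of f "\<lambda>x. (-1) * g x"] LC_cmult[of g "-1"] by simp

lemma LC_sum: "(\<And>n. n \<in> S \<Longrightarrow> b n \<in> LC) \<Longrightarrow> (\<lambda>x. \<Sum>n\<in>S. a n * b n x) \<in> LC"
proof (induction S rule: infinite_finite_induct)
  case (insert n F)
  then have "(\<lambda>x. a n * b n x) \<in> LC" "(\<lambda>x. \<Sum>n\<in>F. a n * b n x) \<in> LC"
    using LC_cmult by auto
  then show ?case using LC_add insert(1,2) by simp
qed (auto simp: LC_zero)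

lemma LC_power_card_power:
  fixes f :: "'a::{field,finite} fps \<Rightarrow> 'a fls"
  assumes f: "f \<in> LC"
  shows "(\<lambda>x. f x ^ (CARD('a) ^ m)) \<in> LC"
proof (rule LC_intro)
  let ?k = "CARD('a) ^ m"
  have k: "?k \<ge> 1" using card_ge_2[where 'a='a] by simp
  show "fq_linear (\<lambda>x. f x ^ ?k)"
    unfolding fq_linear_def
    using f[unfolded LC_def fq_linear_def]
    by (simp add: fls_power_card_power_add fls_const_mult_power_card_power)
  fix e :: real assume "e > 0"
  then obtain d where "d > 0" "\<forall>y. tabs (fps_to_fls y) < d \<longrightarrow> tabs (f y) < min 1 e"
    using LC_continuous_at_0[OF f, of "min 1 e"] by auto
  moreover have "tabs (f y) ^ ?k < e" if "tabs (f y) < min 1 e" for y :: "'a fps"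
    using that power_decreasing[OF k, of "tabs (f y)"] tabs_nonneg[of "f y"] by simp
  ultimately show "\<exists>d>0. \<forall>y. tabs (fps_to_fls y) < d \<longrightarrow> tabs (f y ^ ?k) < e"
    by (auto simp: tabs_power)
qed

section \<open>The sup norm is attained on the monomials\<close>

lemma fps_eq_truncation_plus_small:
  fixes x :: "'a::{field,finite} fps"
  shows "\<exists>y. x = (\<Sum>i<N. fps_const (fps_nth x i) * fps_X ^ i) + y
           \<and> tabs (fps_to_fls y) \<le> 1 / real CARD('a) ^ N"
proof -
  define y where "y = x - (\<Sum>i<N. fps_const (fps_nth x i) * fps_X ^ i)"
  have "fps_nth y i = 0" if "i < N" for i
    using that by (simp add: y_def fps_sum_nth if_distrib[of "(*) _"] sum.delta cong: if_cong)
  then have "subdegree y \<ge> N" if "y \<noteq> 0" using that by (intro subdegree_geI) auto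
  then have "tabs (fps_to_fls y) \<le> 1 / real CARD('a) ^ N"
    using card_ge_2[where 'a='a]
    by (cases "y = 0") (auto simp: tabs_fps_to_fls intro!: divide_left_mono power_increasing)
  then show ?thesis by (intro exI[of _ y]) (simp add: y_def)
qed

lemma card_power_inverse_less: "d > 0 \<Longrightarrow> \<exists>N. 1 / real CARD('a::{field,finite}) ^ N < d"
proof -
  assume "d > 0"
  have "real CARD('a) > 1" using card_ge_2[where 'a='a] by simp
  then obtain N where "1 / d < real CARD('a) ^ N" using real_arch_pow by blast
  then show ?thesis using \<open>d > 0\<close> by (intro exI[of _ N]) (simp add: field_simps)
qed

lemma LC_tendsto_0_at_X_power:
  assumes "f \<in> LC"
  shows "(\<lambda>i. tabs (f (fps_X ^ i :: 'a::{field,finite} fps))) \<longlonglongrightarrow> 0"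
proof (rule LIMSEQ_I)
  fix e :: real assume "e > 0"
  then obtain d where d: "d > 0" "\<forall>y. tabs (fps_to_fls y) < d \<longrightarrow> tabs (f y) < e"
    using LC_continuous_at_0[OF assms] by blast
  then obtain N where N: "1 / real CARD('a) ^ N < d" using card_power_inverse_less by blast
  have "tabs (f (fps_X ^ n)) < e" if "n \<ge> N" for n
  proof -
    have "1 / real CARD('a) ^ n \<le> 1 / real CARD('a) ^ N"
      using that card_ge_2[where 'a='a] by (intro divide_left_mono power_increasing) auto
    then show ?thesis using N d(2) by (simp add: fps_to_fls_power tabs_fls_X_power)
  qed
  then show "\<exists>N. \<forall>n\<ge>N. norm (tabs (f (fps_X ^ n)) - 0) < e"
    by (intro exI[of _ N]) (simp add: abs_of_nonneg tabs_nonneg)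
qed

text \<open>Split x into a polynomial part, on which the ultrametric inequality applies termwise,
  and a tail close to 0, on which continuity applies.\<close>
lemma LC_tabs_le_if_tabs_X_power_le:
  assumes f: "f \<in> LC" and bound: "\<And>i. tabs (f (fps_X ^ i :: 'a::{field,finite} fps)) \<le> c"
  shows "tabs (f x) \<le> c"
proof (rule ccontr)
  assume "\<not> tabs (f x) \<le> c"
  then have less: "c < tabs (f x)" by simp
  have "c \<ge> 0" using bound[of 0] tabs_nonneg[of "f 1"] by simp
  obtain d where d: "d > 0" "\<forall>y. tabs (fps_to_fls y) < d \<longrightarrow> tabs (f y) < tabs (f x)"
    using LC_continuous_at_0[OF f, of "tabs (f x)"] less \<open>c \<ge> 0\<close> by auto
  obtain N where N: "1 / real CARD('a) ^ N < d" using card_power_inverse_less d(1) by blast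
  obtain y where y: "x = (\<Sum>i<N. fps_const (fps_nth x i) * fps_X ^ i) + y"
    and "tabs (fps_to_fls y) \<le> 1 / real CARD('a) ^ N"
    using fps_eq_truncation_plus_small by blast
  then have tail: "tabs (f y) < tabs (f x)" using d N by auto
  have "tabs (fls_const (fps_nth x i) * f (fps_X ^ i)) \<le> 1 * c" for i
    unfolding tabs_mult by (rule mult_mono[OF tabs_fls_const_le_1 bound]) (simp_all add: tabs_nonneg)
  then have poly: "tabs (\<Sum>i<N. fls_const (fps_nth x i) * f (fps_X ^ i)) \<le> c"
    using \<open>c \<ge> 0\<close> by (intro tabs_sum_le) simp_all
  have "f x = (\<Sum>i<N. fls_const (fps_nth x i) * f (fps_X ^ i)) + f y"
    by (subst y) (simp add: LC_additive[OF f] LC_sum_apply[OF f])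
  then have "tabs (f x) \<le> max (tabs (\<Sum>i<N. fls_const (fps_nth x i) * f (fps_X ^ i))) (tabs (f y))"
    by (simp add: tabs_add_le)
  then have "tabs (f x) \<le> max c (tabs (f y))" using poly by linarith
  then show False using less tail by linarith
qed

lemma nonneg_tendsto_0_attains_max:
  fixes u :: "nat \<Rightarrow> real"
  assumes lim: "u \<longlonglongrightarrow> 0" and nonneg: "\<And>i. u i \<ge> 0"
  shows "\<exists>i0. \<forall>i. u i \<le> u i0"
proof (cases "\<forall>i. u i = 0")
  case False
  then obtain j where "u j > 0" using nonneg by (metis less_eq_real_def)
  then obtain N where "\<forall>i\<ge>N. norm (u i - 0) < u j" using LIMSEQ_D[OF lim] by blast
  then have N: "\<forall>i\<ge>N. u i < u j" using nonneg by simp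
  obtain i0 where i0: "i0 \<in> {..max N j}" "Max (u ` {..max N j}) = u i0"
    using obtains_MAX[of "{..max N j}" u] by blast
  have below: "u i \<le> u i0" if "i \<le> max N j" for i
  proof -
    have "u i \<le> Max (u ` {..max N j})" using that by (intro Max_ge) auto
    then show ?thesis using i0(2) by simp
  qed
  have "u i \<le> u i0" for i
  proof (cases "i \<le> max N j")
    case False
    then have "u i < u j" using N by simp
    then show ?thesis using below[of j] by simp
  qed (rule below)
  then show ?thesis by blast
qed auto

lemma LC_max_at_X_power:
  assumes f: "f \<in> LC"
  shows "\<exists>i0. \<forall>x. tabs (f x) \<le> tabs (f (fps_X ^ i0 :: 'a::{field,finite} fps))"
proof -
  obtain i0 where "\<forall>i. tabs (f (fps_X ^ i)) \<le> tabs (f (fps_X ^ i0 :: 'a fps))"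
    using nonneg_tendsto_0_attains_max[OF LC_tendsto_0_at_X_power[OF f] tabs_nonneg] by blast
  then show ?thesis using LC_tabs_le_if_tabs_X_power_le[OF f] by blast
qed

lemma supnorm_eq_max: "(\<And>x. tabs (f x) \<le> tabs (f x0)) \<Longrightarrow> supnorm f = tabs (f x0)"
  unfolding supnorm_def by (intro cSup_eq_maximum) auto

lemma LC_supnorm_attained:
  "f \<in> LC \<Longrightarrow> \<exists>i0. supnorm f = tabs (f (fps_X ^ i0 :: 'a::{field,finite} fps))"
  using LC_max_at_X_power supnorm_eq_max by metis

lemma LC_tabs_le_supnorm: "f \<in> LC \<Longrightarrow> tabs (f x) \<le> supnorm f"
  using LC_max_at_X_power supnorm_eq_max by metis

lemma LC_supnorm_nonneg: "f \<in> LC \<Longrightarrow> supnorm f \<ge> 0"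
  using LC_tabs_le_supnorm[of f 0] tabs_nonneg[of "f 0"] by linarith

section \<open>A triangular criterion for orthonormal bases\<close>

text \<open>Since b n vanishes on the monomials of degree below n, the coefficient of b n in f is
  determined by the values of f on the first n + 1 monomials.\<close>
function expansion_coeff ::
    "(nat \<Rightarrow> 'a::{field,finite} fps \<Rightarrow> 'a fls) \<Rightarrow> ('a fps \<Rightarrow> 'a fls) \<Rightarrow> nat \<Rightarrow> 'a fls" where
  "expansion_coeff b f n =
     (f (fps_X ^ n) - (\<Sum>k<n. expansion_coeff b f k * b k (fps_X ^ n))) / b n (fps_X ^ n)"
  by auto
termination by (relation "inv_image less_than (\<lambda>(b, f, n). n)") auto

declare expansion_coeff.simps [simp del]

definition expansion_remainder ::
    "(nat \<Rightarrow> 'a::{field,finite} fps \<Rightarrow> 'a fls) \<Rightarrow> ('a fps \<Rightarrow> 'a fls) \<Rightarrow> nat \<Rightarrow> 'a fps \<Rightarrow> 'a fls" where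
  "expansion_remainder b f N x = f x - (\<Sum>n<N. expansion_coeff b f n * b n x)"

lemma expansion_remainder_0 [simp]: "expansion_remainder b f 0 = f"
  by (simp add: expansion_remainder_def fun_eq_iff)

lemma expansion_remainder_Suc:
  "expansion_remainder b f (Suc N) x = expansion_remainder b f N x - expansion_coeff b f N * b N x"
  by (simp add: expansion_remainder_def)

lemma expansion_remainder_split:
  assumes "M \<le> N"
  shows "expansion_remainder b f N x
    = expansion_remainder b f M x - (\<Sum>n\<in>{M..<N}. expansion_coeff b f n * b n x)"
proof -
  have "(\<Sum>n<N. expansion_coeff b f n * b n x)
      = (\<Sum>n<M. expansion_coeff b f n * b n x) + (\<Sum>n\<in>{M..<N}. expansion_coeff b f n * b n x)"
    using sum.atLeastLessThan_concat[of 0 M N "\<lambda>n. expansion_coeff b f n * b n x"] assms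
    by (simp add: atLeast0LessThan)
  then show ?thesis unfolding expansion_remainder_def by simp
qed

lemma expansion_coeff_eq_remainder:
  "expansion_coeff b f N = expansion_remainder b f N (fps_X ^ N) / b N (fps_X ^ N)"
  by (subst expansion_coeff.simps) (simp add: expansion_remainder_def)

locale triangular_family =
  fixes b :: "nat \<Rightarrow> 'a::{field,finite} fps \<Rightarrow> 'a fls"
  assumes in_LC: "b n \<in> LC"
    and vanishes_below_diag: "i < n \<Longrightarrow> b n (fps_X ^ i) = 0"
    and tabs_diag: "tabs (b n (fps_X ^ n)) = 1"
    and tabs_above_diag: "n < i \<Longrightarrow> tabs (b n (fps_X ^ i)) < 1"
begin

lemma tabs_le_1: "tabs (b n x) \<le> 1"
proof (rule LC_tabs_le_if_tabs_X_power_le[OF in_LC])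
  show "tabs (b n (fps_X ^ i)) \<le> 1" for i
    using vanishes_below_diag[of i n] tabs_diag[of n] tabs_above_diag[of n i]
    by (cases i n rule: linorder_cases) auto
qed

lemma diag_nonzero: "b n (fps_X ^ n) \<noteq> 0"
  using tabs_diag[of n] by auto

lemma remainder_LC: "f \<in> LC \<Longrightarrow> expansion_remainder b f N \<in> LC"
  using LC_diff[OF _ LC_sum[OF in_LC]] by (simp add: expansion_remainder_def[abs_def])

lemma remainder_vanishes_below: "i < N \<Longrightarrow> expansion_remainder b f N (fps_X ^ i) = 0"
proof (induction N)
  case (Suc N)
  show ?case
  proof (cases "i < N")
    case True
    then show ?thesis using Suc by (simp add: expansion_remainder_Suc vanishes_below_diag)
  next
    case False
    then have "i = N" using Suc.prems by simp
    then show ?thesis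
      using diag_nonzero[of N] by (simp add: expansion_remainder_Suc expansion_coeff_eq_remainder)
  qed
qed simp

lemma expansion_at_X_power:
  "f (fps_X ^ i) = (\<Sum>n<Suc i. expansion_coeff b f n * b n (fps_X ^ i))"
  using remainder_vanishes_below[of i "Suc i" f] unfolding expansion_remainder_def by simp

lemma tabs_coeff_le_supnorm_remainder:
  "f \<in> LC \<Longrightarrow> tabs (expansion_coeff b f N) \<le> supnorm (expansion_remainder b f N)"
  by (simp add: expansion_coeff_eq_remainder tabs_divide tabs_diag LC_tabs_le_supnorm remainder_LC)

lemma supnorm_remainder_Suc_le:
  assumes f: "f \<in> LC"
  shows "supnorm (expansion_remainder b f (Suc N)) \<le> supnorm (expansion_remainder b f N)"
proof -
  let ?r = "expansion_remainder b f N" and ?c = "expansion_coeff b f N"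
  have "tabs (expansion_remainder b f (Suc N) x) \<le> supnorm ?r" for x
  proof -
    have "tabs (?c * b N x) \<le> supnorm ?r * 1"
      unfolding tabs_mult using tabs_coeff_le_supnorm_remainder[OF f] tabs_le_1
      by (rule mult_mono) (simp_all add: tabs_nonneg LC_supnorm_nonneg remainder_LC f)
    moreover have "tabs (?r x) \<le> supnorm ?r" by (rule LC_tabs_le_supnorm[OF remainder_LC[OF f]])
    ultimately show ?thesis
      unfolding expansion_remainder_Suc by (intro order_trans[OF tabs_diff_le] max.boundedI) simp_all
  qed
  then show ?thesis
    using LC_supnorm_attained[OF remainder_LC[OF f], of "Suc N"] by metis
qed

lemma supnorm_remainder_antimono:
  assumes f: "f \<in> LC"
  shows "M \<le> N \<Longrightarrow> supnorm (expansion_remainder b f N) \<le> supnorm (expansion_remainder b f M)"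
proof (induction N rule: dec_induct)
  case (step N)
  then show ?case using supnorm_remainder_Suc_le[OF f, of N] by linarith
qed simp

lemma tabs_sum_terms_above_diag_le:
  assumes f: "f \<in> LC" and rho: "supnorm (expansion_remainder b f N) \<le> \<rho>" and "N' \<le> j"
  shows "tabs (\<Sum>n\<in>{N..<N'}. expansion_coeff b f n * b n (fps_X ^ j)) \<le> \<rho> / 2"
proof (rule tabs_sum_le)
  show "\<rho> / 2 \<ge> 0" using rho LC_supnorm_nonneg[OF remainder_LC[OF f, of N]] by linarith
  fix n assume n: "n \<in> {N..<N'}"
  have "tabs (expansion_coeff b f n) * tabs (b n (fps_X ^ j)) \<le> \<rho> * (1 / 2)"
  proof (rule mult_mono)
    show "tabs (expansion_coeff b f n) \<le> \<rho>"
      using tabs_coeff_le_supnorm_remainder[OF f, of n] supnorm_remainder_antimono[OF f, of N n] n rho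
      by auto
    show "tabs (b n (fps_X ^ j)) \<le> 1 / 2"
      using n \<open>N' \<le> j\<close> by (intro tabs_less_1_imp_le_half tabs_above_diag) auto
  qed (use rho LC_supnorm_nonneg[OF remainder_LC[OF f, of N]] in \<open>simp_all add: tabs_nonneg\<close>)
  then show "tabs (expansion_coeff b f n * b n (fps_X ^ j)) \<le> \<rho> / 2" by (simp add: tabs_mult)
qed

text \<open>Take N' so large that the remainder r_N is at most rho/2 on all T^j with j \<ge> N'. Then
  r_N' vanishes on T^j for j < N', and for j \<ge> N' it differs from r_N(T^j) by terms
  a_n b_n(T^j) with |a_n| \<le> rho and |b_n(T^j)| \<le> 1/2.\<close>
lemma supnorm_remainder_halves:
  assumes f: "f \<in> LC" and rho: "supnorm (expansion_remainder b f N) \<le> \<rho>"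
  shows "\<exists>N'\<ge>N. supnorm (expansion_remainder b f N') \<le> \<rho> / 2"
proof (cases "\<rho> > 0")
  case False
  then show ?thesis using rho by (intro exI[of _ N]) auto
next
  case True
  let ?r = "expansion_remainder b f"
  obtain I where I: "\<forall>i\<ge>I. norm (tabs (?r N (fps_X ^ i)) - 0) < \<rho> / 2"
    using LIMSEQ_D[OF LC_tendsto_0_at_X_power[OF remainder_LC[OF f]]] True
    by (metis half_gt_zero)
  define N' where "N' = max I N"
  obtain j where j: "supnorm (?r N') = tabs (?r N' (fps_X ^ j))"
    using LC_supnorm_attained[OF remainder_LC[OF f]] by blast
  have "tabs (?r N' (fps_X ^ j)) \<le> \<rho> / 2"
  proof (cases "j < N'")
    case True
    then show ?thesis using \<open>\<rho> > 0\<close> by (simp add: remainder_vanishes_below)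
  next
    case False
    then have "j \<ge> I" by (simp add: N'_def)
    then have "tabs (?r N (fps_X ^ j)) \<le> \<rho> / 2"
      using I[rule_format, of j] by (simp add: abs_of_nonneg tabs_nonneg)
    moreover have "tabs (\<Sum>n\<in>{N..<N'}. expansion_coeff b f n * b n (fps_X ^ j)) \<le> \<rho> / 2"
      using False by (intro tabs_sum_terms_above_diag_le[OF f rho]) simp
    ultimately show ?thesis
      unfolding expansion_remainder_split[of N N', OF max.cobounded2[of N I, folded N'_def]]
      by (intro order_trans[OF tabs_diff_le] max.boundedI)
  qed
  then show ?thesis using j by (intro exI[of _ N']) (auto simp: N'_def)
qed

lemma supnorm_remainder_tendsto_0:
  assumes f: "f \<in> LC"
  shows "(\<lambda>N. supnorm (expansion_remainder b f N)) \<longlonglongrightarrow> 0"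
proof (rule LIMSEQ_I)
  let ?s = "\<lambda>N. supnorm (expansion_remainder b f N)"
  have decay: "\<exists>N. ?s N \<le> ?s 0 / 2 ^ k" for k
  proof (induction k)
    case (Suc k)
    then obtain N where "?s N \<le> ?s 0 / 2 ^ k" by blast
    then obtain N' where "?s N' \<le> ?s 0 / 2 ^ k / 2" using supnorm_remainder_halves[OF f] by blast
    then show ?case by (intro exI[of _ N']) (simp add: field_simps)
  qed (intro exI[of _ 0], simp)
  fix e :: real assume "e > 0"
  obtain k where "?s 0 / e < 2 ^ k" using real_arch_pow[of 2] by auto
  then have "?s 0 / 2 ^ k < e" using \<open>e > 0\<close> by (simp add: field_simps)
  moreover obtain N where "?s N \<le> ?s 0 / 2 ^ k" using decay by blast
  ultimately have "?s N < e" by linarith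
  then have "?s M < e" if "M \<ge> N" for M
    using supnorm_remainder_antimono[OF f that] by simp
  then show "\<exists>N. \<forall>M\<ge>N. norm (?s M - 0) < e"
    using LC_supnorm_nonneg[OF remainder_LC[OF f]] by (intro exI[of _ N]) simp
qed

lemma series_to_expansion_coeff: "f \<in> LC \<Longrightarrow> series_to (expansion_coeff b f) b f"
  using supnorm_remainder_tendsto_0
  unfolding series_to_def expansion_remainder_def[abs_def] by simp

lemma null_seq_expansion_coeff: "f \<in> LC \<Longrightarrow> null_seq (expansion_coeff b f)"
  unfolding null_seq_def
  by (rule Lim_null_comparison[OF _ supnorm_remainder_tendsto_0])
    (simp_all add: tabs_nonneg tabs_coeff_le_supnorm_remainder)

lemma series_to_imp_expansion_at_X_power:
  assumes f: "f \<in> LC" and s: "series_to a b f"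
  shows "f (fps_X ^ i) = (\<Sum>n<Suc i. a n * b n (fps_X ^ i))"
proof -
  let ?S = "\<lambda>N x. f x - (\<Sum>n<N. a n * b n x)"
  have "tabs (?S (Suc i) (fps_X ^ i)) \<le> supnorm (?S N)" if "N \<ge> Suc i" for N
  proof -
    have "(\<Sum>n<N. a n * b n (fps_X ^ i)) = (\<Sum>n<Suc i. a n * b n (fps_X ^ i))"
      using that by (intro sum.mono_neutral_right) (auto simp: vanishes_below_diag)
    moreover have "tabs (?S N (fps_X ^ i)) \<le> supnorm (?S N)"
      by (rule LC_tabs_le_supnorm[OF LC_diff[OF f LC_sum[OF in_LC]]])
    ultimately show ?thesis by simp
  qed
  then have "tabs (?S (Suc i) (fps_X ^ i)) \<le> 0"
    using s unfolding series_to_def by (intro LIMSEQ_le_const[where X = "\<lambda>N. supnorm (?S N)"]) blast+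
  then show ?thesis using tabs_nonneg[of "?S (Suc i) (fps_X ^ i)"] by simp
qed

lemma expansion_coeff_unique:
  assumes f: "f \<in> LC" and a: "\<And>i. f (fps_X ^ i) = (\<Sum>n<Suc i. a n * b n (fps_X ^ i))"
  shows "a = expansion_coeff b f"
proof
  fix n show "a n = expansion_coeff b f n"
  proof (induction n rule: less_induct)
    case (less n)
    then have "(\<Sum>k<n. a k * b k (fps_X ^ n)) = (\<Sum>k<n. expansion_coeff b f k * b k (fps_X ^ n))"
      by (intro sum.cong) auto
    moreover have "f (fps_X ^ n) = (\<Sum>k<n. a k * b k (fps_X ^ n)) + a n * b n (fps_X ^ n)"
      using a[of n] by simp
    moreover have "f (fps_X ^ n)
        = (\<Sum>k<n. expansion_coeff b f k * b k (fps_X ^ n)) + expansion_coeff b f n * b n (fps_X ^ n)"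
      using expansion_at_X_power[of f n] by simp
    ultimately have "a n * b n (fps_X ^ n) = expansion_coeff b f n * b n (fps_X ^ n)"
      by (metis add_left_cancel)
    then show ?case using diag_nonzero[of n] by simp
  qed
qed

text \<open>At the monomial where ||f|| is attained, the ultrametric inequality forces one term
  a_n b_n(T^i) of the finite expansion of f(T^i) to have absolute value at least ||f||.\<close>
lemma supnorm_eq_max_tabs_coeff:
  assumes f: "f \<in> LC"
  shows "(\<exists>n. tabs (expansion_coeff b f n) = supnorm f)
    \<and> (\<forall>n. tabs (expansion_coeff b f n) \<le> supnorm f)"
proof -
  have le: "tabs (expansion_coeff b f n) \<le> supnorm f" for n
    using tabs_coeff_le_supnorm_remainder[OF f, of n] supnorm_remainder_antimono[OF f, of 0 n] by simp
  obtain i where i: "supnorm f = tabs (f (fps_X ^ i))" using LC_supnorm_attained[OF f] by blast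
  obtain n where "tabs (f (fps_X ^ i)) \<le> tabs (expansion_coeff b f n * b n (fps_X ^ i))"
    using tabs_sum_le_term[of "{..<Suc i}" "\<lambda>n. expansion_coeff b f n * b n (fps_X ^ i)"]
      expansion_at_X_power[of f i] by auto
  also have "\<dots> \<le> tabs (expansion_coeff b f n)"
    unfolding tabs_mult by (rule mult_left_le[OF tabs_le_1 tabs_nonneg])
  finally show ?thesis using le i by (metis antisym)
qed

theorem orthonormal_basis: "orthonormal_basis b"
proof -
  have unique: "a = expansion_coeff b f" if "f \<in> LC" "series_to a b f" for f a
    using expansion_coeff_unique series_to_imp_expansion_at_X_power that by blast
  have "\<exists>!a. null_seq a \<and> series_to a b f" if "f \<in> LC" for f
    using that unique null_seq_expansion_coeff series_to_expansion_coeff by (intro ex1I) auto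
  moreover have "(\<exists>n. tabs (a n) = supnorm f) \<and> (\<forall>n. tabs (a n) \<le> supnorm f)"
    if "f \<in> LC" "series_to a b f" for f a
    using unique[OF that] supnorm_eq_max_tabs_coeff[OF that(1)] by simp
  ultimately show ?thesis unfolding orthonormal_basis_def using in_LC by blast
qed

end

lemma triangular_family_power_card_power:
  fixes g :: "nat \<Rightarrow> 'a::{field,finite} fps \<Rightarrow> 'a fls"
  assumes "triangular_family g"
  shows "triangular_family (\<lambda>n x. g n x ^ (CARD('a) ^ m))"
proof -
  interpret triangular_family g by fact
  have k: "CARD('a) ^ m \<ge> 1" using card_ge_2[where 'a='a] by simp
  show ?thesis
  proof
    show "(\<lambda>x. g n x ^ CARD('a) ^ m) \<in> LC" for n by (rule LC_power_card_power[OF in_LC])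
    show "g n (fps_X ^ i) ^ CARD('a) ^ m = 0" if "i < n" for n i using vanishes_below_diag[OF that] k by simp
    show "tabs (g n (fps_X ^ n) ^ CARD('a) ^ m) = 1" for n by (simp add: tabs_power tabs_diag)
    show "tabs (g n (fps_X ^ i) ^ CARD('a) ^ m) < 1" if "n < i" for n i
      using tabs_above_diag[OF that] k unfolding tabs_power by (subst power_less_one_iff) (auto simp: tabs_nonneg)
  qed
qed

section \<open>Hasse derivatives\<close>

lemma hasse_fq_linear: "fq_linear (hasse n :: 'a::{field,finite} fps \<Rightarrow> 'a fls)"
  unfolding fq_linear_def
proof (intro allI)
  fix c d :: 'a and x y :: "'a fps"
  have "Abs_fps (\<lambda>j. of_nat ((j + n) choose n) * (fps_const c * x + fps_const d * y) $ (j + n))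
      = fps_const c * Abs_fps (\<lambda>j. of_nat ((j + n) choose n) * x $ (j + n))
        + fps_const d * Abs_fps (\<lambda>j. of_nat ((j + n) choose n) * y $ (j + n))"
    by (rule fps_ext) (simp add: algebra_simps)
  then show "hasse n (fps_const c * x + fps_const d * y) = fls_const c * hasse n x + fls_const d * hasse n y"
    unfolding hasse_def by (simp add: fls_times_fps_to_fls)
qed

lemma tabs_hasse_le: "tabs (hasse n z :: 'a::{field,finite} fls) \<le> real CARD('a) ^ n * tabs (fps_to_fls z)"
proof -
  define H where "H = Abs_fps (\<lambda>j. of_nat ((j + n) choose n) * z $ (j + n))"
  have q: "real CARD('a) \<ge> 2" using card_ge_2[where 'a='a] by simp
  show ?thesis
  proof (cases "H = 0")
    case True
    then show ?thesis using q tabs_nonneg[of "fps_to_fls z"] by (simp add: hasse_def H_def[symmetric])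
  next
    case False
    then have "H $ subdegree H \<noteq> 0" by simp
    then have "z $ (subdegree H + n) \<noteq> 0" by (simp add: H_def)
    then have "z \<noteq> 0" and "subdegree z \<le> subdegree H + n" by (auto intro: subdegree_leI)
    then have "1 / real CARD('a) ^ subdegree H \<le> real CARD('a) ^ n * (1 / real CARD('a) ^ subdegree z)"
      using q power_increasing[of "subdegree z" "subdegree H + n" "real CARD('a)"]
      by (simp add: field_simps power_add)
    then show ?thesis using False \<open>z \<noteq> 0\<close> by (simp add: hasse_def H_def[symmetric] tabs_fps_to_fls)
  qed
qed

lemma hasse_X_power: "hasse n (fps_X ^ i :: 'a::{field,finite} fps) =
   (if i < n then 0 else fls_const (of_nat (i choose n)) * fls_X ^ (i - n))"
proof -
  have "Abs_fps (\<lambda>j. of_nat ((j + n) choose n) * (fps_X ^ i :: 'a fps) $ (j + n))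
     = (if i < n then 0 else fps_const (of_nat (i choose n)) * fps_X ^ (i - n))"
    by (rule fps_ext) auto
  then show ?thesis unfolding hasse_def by (simp add: fls_times_fps_to_fls fps_to_fls_power)
qed

lemma triangular_family_hasse: "triangular_family (hasse :: nat \<Rightarrow> 'a::{field,finite} fps \<Rightarrow> 'a fls)"
proof
  show "hasse n \<in> LC" for n
    by (rule LC_bounded_intro[OF hasse_fq_linear tabs_hasse_le])
  show "hasse n (fps_X ^ i :: 'a fps) = 0" if "i < n" for n i using that by (simp add: hasse_X_power)
  show "tabs (hasse n (fps_X ^ n :: 'a fps)) = 1" for n by (simp add: hasse_X_power)
  show "tabs (hasse n (fps_X ^ i :: 'a fps)) < 1" if "n < i" for n i
  proof -
    have "tabs (hasse n (fps_X ^ i :: 'a fps))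
        = tabs (fls_const (of_nat (i choose n) :: 'a)) * (1 / real CARD('a) ^ (i - n))"
      using that by (simp add: hasse_X_power tabs_mult tabs_fls_X_power)
    also have "\<dots> \<le> 1 * (1 / real CARD('a) ^ (i - n))"
      by (intro mult_right_mono tabs_fls_const_le_1) simp
    also have "\<dots> < 1" using card_power_gt_1[of "i - n", where 'a='a] that by simp
    finally show ?thesis .
  qed
qed

section \<open>Carlitz polynomials\<close>

definition polys_below :: "nat \<Rightarrow> 'a::zero fps set" where
  "polys_below n = {m. \<forall>i\<ge>n. m $ i = 0}"

lemma carlitz_e_eq_prod: "carlitz_e n x = (\<Prod>m\<in>polys_below n. fps_to_fls x - fps_to_fls m)"
  unfolding carlitz_e_def polys_below_def ..

lemma polys_below_0: "polys_below 0 = {0}"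
  unfolding polys_below_def by (auto intro: fps_ext)

lemma zero_in_polys_below: "0 \<in> polys_below n"
  unfolding polys_below_def by simp

lemma diff_in_polys_below:
  "u \<in> polys_below n \<Longrightarrow> v \<in> polys_below n \<Longrightarrow> u - v \<in> polys_below (n :: nat)"
  for u v :: "'a::ab_group_add fps"
  unfolding polys_below_def by simp

lemma polys_below_Suc:
  "bij_betw (\<lambda>(c, m). fps_const c + fps_X * m) (UNIV \<times> polys_below n)
     (polys_below (Suc n) :: 'a::{field,finite} fps set)"
proof -
  let ?split = "\<lambda>m::'a fps. (m $ 0, Abs_fps (\<lambda>i. m $ Suc i))"
  show ?thesis
    by (rule bij_betw_byWitness[where f' = ?split])
      (auto intro!: fps_ext simp: polys_below_def fps_X_mult_nth)
qed

lemma finite_card_polys_below: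
  "finite (polys_below n :: 'a::{field,finite} fps set) \<and> card (polys_below n :: 'a fps set) = CARD('a) ^ n"
proof (induction n)
  case (Suc n)
  then have "finite ((UNIV :: 'a set) \<times> (polys_below n :: 'a fps set))"
    and "card ((UNIV :: 'a set) \<times> (polys_below n :: 'a fps set)) = CARD('a) ^ Suc n"
    by (simp_all add: card_cartesian_product)
  then show ?case using bij_betw_finite[OF polys_below_Suc] bij_betw_same_card[OF polys_below_Suc] by metis
qed (simp add: polys_below_0)

lemma finite_polys_below: "finite (polys_below n :: 'a::{field,finite} fps set)"
  using finite_card_polys_below by blast

lemma card_polys_below: "card (polys_below n :: 'a::{field,finite} fps set) = CARD('a) ^ n"
  using finite_card_polys_below by blast

lemma carlitz_e_vanishes: "m \<in> polys_below n \<Longrightarrow> carlitz_e n m = 0"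
  unfolding carlitz_e_eq_prod by (rule prod_zero) (use finite_polys_below in auto)

lemma carlitz_e_add: "carlitz_e n (x + y :: 'a::{field,finite} fps) = carlitz_e n x + carlitz_e n y"
proof -
  let ?W = "fps_to_fls ` polys_below n :: 'a fls set"
  have e: "carlitz_e n z = (\<Prod>w\<in>?W. fps_to_fls z - w)" for z :: "'a fps"
    unfolding carlitz_e_eq_prod by (subst prod.reindex) (auto simp: inj_on_def)
  have "(\<Prod>w\<in>?W. (fps_to_fls x + fps_to_fls y) - w)
      = (\<Prod>w\<in>?W. fps_to_fls x - w) + (\<Prod>w\<in>?W. fps_to_fls y - w)"
  proof (rule prod_diff_subgroup_additive)
    show "finite ?W" using finite_polys_below by blast
    show "0 \<in> ?W" using zero_in_polys_below by (metis fps_zero_to_fls image_eqI)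
    show "u - v \<in> ?W" if uv: "u \<in> ?W" "v \<in> ?W" for u v
    proof -
      obtain u' v' where "u = fps_to_fls u'" "v = fps_to_fls v'" "u' \<in> polys_below n" "v' \<in> polys_below n"
        using uv by blast
      then show ?thesis by (metis diff_in_polys_below fps_to_fls_minus image_eqI)
    qed
  qed
  then show ?thesis by (simp add: e)
qed

lemma carlitz_e_smult: "carlitz_e n (fps_const c * x :: 'a::{field,finite} fps) = fls_const c * carlitz_e n x"
proof (cases "c = 0")
  case True
  then show ?thesis using carlitz_e_vanishes[OF zero_in_polys_below] by simp
next
  case False
  have scale: "bij_betw ((*) (fps_const c)) (polys_below n) (polys_below n :: 'a fps set)"
    using False
    by (intro bij_betw_byWitness[where f' = "(*) (fps_const (inverse c))"])
      (auto simp: polys_below_def mult.assoc[symmetric] simp flip: fps_const_mult)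
  have "carlitz_e n (fps_const c * x) = (\<Prod>m\<in>polys_below n. fls_const c * fps_to_fls x - fps_to_fls m)"
    unfolding carlitz_e_eq_prod by (simp add: fls_times_fps_to_fls)
  also have "\<dots> = (\<Prod>m\<in>polys_below n. fls_const c * fps_to_fls x - fps_to_fls (fps_const c * m))"
    using prod.reindex_bij_betw[OF scale, of "\<lambda>m. fls_const c * fps_to_fls x - fps_to_fls m"] by simp
  also have "\<dots> = (\<Prod>m\<in>polys_below n. fls_const c * (fps_to_fls x - fps_to_fls m))"
    by (simp add: fls_times_fps_to_fls algebra_simps)
  also have "\<dots> = fls_const c ^ (CARD('a) ^ n) * carlitz_e n x"
    by (simp add: carlitz_e_eq_prod prod.distrib card_polys_below)
  finally show ?thesis by (simp add: finite_field_power_card_power flip: fls_const_power)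
qed

lemma carlitzF_0: "carlitzF TYPE('a::{field,finite}) 0 = 1"
  unfolding carlitzF_def by simp

lemma carlitzE_eq: "carlitzE n x = carlitz_e n x / carlitzF TYPE('a::{field,finite}) n"
  by (simp add: carlitzE_def carlitz_e_eq_prod polys_below_0 carlitzF_0)

lemma carlitzE_fq_linear: "fq_linear (carlitzE n :: 'a::{field,finite} fps \<Rightarrow> 'a fls)"
  unfolding fq_linear_def carlitzE_eq by (simp add: carlitz_e_add carlitz_e_smult add_divide_distrib)

lemma tabs_bracket: "i \<ge> 1 \<Longrightarrow> tabs (bracket TYPE('a::{field,finite}) i) = 1 / real CARD('a)"
proof -
  assume "i \<ge> 1"
  then have "CARD('a) ^ i \<ge> CARD('a) ^ 1" using card_ge_2[where 'a='a] by (intro power_increasing) auto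
  then have gt: "CARD('a) ^ i > 1" using card_ge_2[where 'a='a] by simp
  then have gt': "(1::int) < int CARD('a) ^ i" by (metis of_nat_1 of_nat_less_iff of_nat_power)
  have "fls_subdegree (fls_X ^ (CARD('a) ^ i) - fls_X :: 'a fls) = 1"
    using gt gt' by (subst fls_subdegree_diff_eq2) auto
  moreover have "(fls_X ^ (CARD('a) ^ i) - fls_X :: 'a fls) \<noteq> 0"
  proof
    assume "(fls_X ^ (CARD('a) ^ i) - fls_X :: 'a fls) = 0"
    then have "fls_subdegree (fls_X ^ (CARD('a) ^ i) :: 'a fls) = fls_subdegree (fls_X :: 'a fls)" by simp
    then show False using gt' by simp
  qed
  ultimately show ?thesis unfolding tabs_def bracket_def by (simp add: power_int_minus inverse_eq_divide)
qed

lemma tabs_carlitzF: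
  "tabs (carlitzF TYPE('a::{field,finite}) n) = (1 / real CARD('a)) ^ (\<Sum>j<n. CARD('a) ^ j)"
proof -
  have "tabs (carlitzF TYPE('a) n) = (\<Prod>i\<in>{1..n}. (1 / real CARD('a)) ^ (CARD('a) ^ (n - i)))"
    unfolding carlitzF_def tabs_prod by (intro prod.cong) (auto simp: tabs_power tabs_bracket)
  also have "\<dots> = (1 / real CARD('a)) ^ (\<Sum>i\<in>{1..n}. CARD('a) ^ (n - i))"
    by (simp add: power_sum)
  also have "(\<Sum>i\<in>{1..n}. CARD('a) ^ (n - i)) = (\<Sum>j<n. CARD('a) ^ j)"
    by (rule sum.reindex_bij_witness[of _ "\<lambda>j. n - j" "\<lambda>i. n - i"]) auto
  finally show ?thesis .
qed

lemma carlitzF_nonzero: "carlitzF TYPE('a::{field,finite}) n \<noteq> 0"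
proof -
  have "tabs (carlitzF TYPE('a) n) \<noteq> 0" unfolding tabs_carlitzF using card_ge_2[where 'a='a] by simp
  then show ?thesis by simp
qed

lemma tabs_X_power_Suc_minus_unit:
  fixes m :: "'a::{field,finite} fps"
  assumes "c \<noteq> 0"
  shows "tabs (fps_to_fls (fps_X ^ Suc i) - fps_to_fls (fps_const c + fps_X * m)) = 1"
proof -
  let ?y = "fps_X ^ Suc i - (fps_const c + fps_X * m)"
  have "?y $ 0 \<noteq> 0" using assms by simp
  then have "?y \<noteq> 0" and "subdegree ?y = 0" by (metis fps_zero_nth, rule subdegree_eq_0)
  then have "tabs (fps_to_fls ?y) = 1" using tabs_fps_to_fls[of ?y] by (simp only: power_0) simp
  then show ?thesis by (simp only: fps_to_fls_minus)
qed

lemma tabs_X_power_Suc_minus_X_mult: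
  fixes m :: "'a::{field,finite} fps"
  shows "tabs (fps_to_fls (fps_X ^ Suc i) - fps_to_fls (fps_const 0 + fps_X * m))
    = 1 / real CARD('a) * tabs (fps_to_fls (fps_X ^ i) - fps_to_fls m)"
proof -
  have "fps_to_fls (fps_X ^ Suc i) - fps_to_fls (fps_const 0 + fps_X * m)
      = fls_X * (fps_to_fls (fps_X ^ i) - fps_to_fls (m :: 'a fps))"
    by (simp add: fls_times_fps_to_fls algebra_simps)
  then show ?thesis using tabs_fls_X_power[of 1, where 'a='a] by (simp add: tabs_mult)
qed

text \<open>Writing the roots of e_(n+1) as c + T m with m a root of e_n, the factors with c \<noteq> 0
  are units at T^(i+1), and the q^n factors with c = 0 are T times the factors of e_n(T^i).\<close>
lemma tabs_carlitz_e_X_power_Suc: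
  "tabs (carlitz_e (Suc n) (fps_X ^ Suc i :: 'a::{field,finite} fps))
    = (1 / real CARD('a)) ^ (CARD('a) ^ n) * tabs (carlitz_e n (fps_X ^ i :: 'a fps))"
proof -
  let ?g = "\<lambda>m. tabs (fps_to_fls (fps_X ^ Suc i :: 'a fps) - fps_to_fls m)"
  have "tabs (carlitz_e (Suc n) (fps_X ^ Suc i :: 'a fps))
      = (\<Prod>c\<in>UNIV. \<Prod>m\<in>polys_below n. ?g (fps_const c + fps_X * m))"
    unfolding carlitz_e_eq_prod tabs_prod prod.cartesian_product
    using prod.reindex_bij_betw[OF polys_below_Suc, of ?g] by (simp add: case_prod_unfold)
  also have "\<dots> = (\<Prod>m\<in>polys_below n. ?g (fps_const 0 + fps_X * m))
      * (\<Prod>c\<in>UNIV - {0}. \<Prod>m\<in>polys_below n. ?g (fps_const c + fps_X * m))"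
    by (rule prod.remove) simp_all
  also have "(\<Prod>c\<in>UNIV - {0}. \<Prod>m\<in>polys_below n. ?g (fps_const c + fps_X * m)) = 1"
    using tabs_X_power_Suc_minus_unit by (intro prod.neutral ballI) blast
  also have "(\<Prod>m\<in>polys_below n. ?g (fps_const 0 + fps_X * m)) * 1
      = (\<Prod>m\<in>polys_below n. 1 / real CARD('a) * tabs (fps_to_fls (fps_X ^ i) - fps_to_fls (m :: 'a fps)))"
    by (simp only: tabs_X_power_Suc_minus_X_mult mult_1_right)
  also have "\<dots> = (1 / real CARD('a)) ^ (CARD('a) ^ n) * tabs (carlitz_e n (fps_X ^ i :: 'a fps))"
    unfolding prod.distrib prod_constant card_polys_below carlitz_e_eq_prod tabs_prod ..
  finally show ?thesis .
qed

lemma tabs_carlitz_e_X_power: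
  "i \<ge> n \<Longrightarrow> tabs (carlitz_e n (fps_X ^ i :: 'a::{field,finite} fps))
    = (1 / real CARD('a)) ^ ((\<Sum>j<n. CARD('a) ^ j) + (i - n))"
proof (induction n arbitrary: i)
  case 0
  then show ?case
    by (simp add: carlitz_e_eq_prod polys_below_0 fps_to_fls_power tabs_fls_X_power power_one_over)
next
  case (Suc n)
  then obtain i' where i': "i = Suc i'" "i' \<ge> n" by (metis Suc_le_D Suc_le_mono)
  show ?case
    unfolding i'(1) tabs_carlitz_e_X_power_Suc Suc.IH[OF i'(2)]
    by (simp add: power_add[symmetric] algebra_simps)
qed

lemma tabs_carlitzE_X_power:
  "i \<ge> n \<Longrightarrow> tabs (carlitzE n (fps_X ^ i :: 'a::{field,finite} fps)) = (1 / real CARD('a)) ^ (i - n)"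
  unfolding carlitzE_eq tabs_divide tabs_carlitzF
  using card_ge_2[where 'a='a] by (simp add: tabs_carlitz_e_X_power power_add del: add_diff_assoc)

text \<open>All factors of e_n(z) other than z itself have absolute value at most 1.\<close>
lemma tabs_carlitzE_le:
  "tabs (carlitzE n z :: 'a::{field,finite} fls)
    \<le> 1 / tabs (carlitzF TYPE('a) n) * tabs (fps_to_fls z)"
proof -
  have "tabs (carlitz_e n z) = tabs (fps_to_fls z - fps_to_fls 0)
      * (\<Prod>m\<in>polys_below n - {0}. tabs (fps_to_fls z - fps_to_fls m))"
    unfolding carlitz_e_eq_prod tabs_prod using finite_polys_below zero_in_polys_below by (rule prod.remove)
  also have "\<dots> \<le> tabs (fps_to_fls z) * 1"
    by (intro mult_mono prod_le_1)
      (auto simp: tabs_nonneg tabs_fps_to_fls_le_1 prod_nonneg simp flip: fps_to_fls_minus)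
  finally show ?thesis
    using tabs_pos[OF carlitzF_nonzero[of n, where 'a='a]]
    by (simp add: carlitzE_eq tabs_divide divide_right_mono)
qed

lemma triangular_family_carlitzE:
  "triangular_family (carlitzE :: nat \<Rightarrow> 'a::{field,finite} fps \<Rightarrow> 'a fls)"
proof
  show "carlitzE n \<in> LC" for n
    by (rule LC_bounded_intro[OF carlitzE_fq_linear tabs_carlitzE_le])
  show "carlitzE n (fps_X ^ i :: 'a fps) = 0" if "i < n" for n i
  proof -
    have "fps_X ^ i \<in> (polys_below n :: 'a fps set)" using that by (auto simp: polys_below_def)
    then show ?thesis by (simp add: carlitzE_eq carlitz_e_vanishes)
  qed
  show "tabs (carlitzE n (fps_X ^ n :: 'a fps)) = 1" for n by (simp add: tabs_carlitzE_X_power)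
  show "tabs (carlitzE n (fps_X ^ i :: 'a fps)) < 1" if "n < i" for n i
    using that card_power_gt_1[of "i - n", where 'a='a] by (simp add: tabs_carlitzE_X_power power_one_over)
qed

theorem corollary6:
  fixes m :: nat
  shows "orthonormal_basis (\<lambda>n x. (carlitzE n x :: 'a::{field,finite} fls) ^ (CARD('a) ^ m))
       \<and> orthonormal_basis (\<lambda>n x. (hasse n x :: 'a fls) ^ (CARD('a) ^ m))"
  using triangular_family.orthonormal_basis[OF triangular_family_power_card_power[OF triangular_family_carlitzE]]
    triangular_family.orthonormal_basis[OF triangular_family_power_card_power[OF triangular_family_hasse]]
  by blast

end
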